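(* Let $\rho_{AB}$ be a state on $A\otimes B$ with $A$ a qubit ($\dim A=2$) and $B$ finite-dimensional. Then $$Q^A_{\mathcal N}(\rho_{AB})=\min_{\{|a_0\rangle,|a_1\rangle\}}\frac12\big\|\rho_{AB}-\Pi_{\{|a_k\rangle\}}[\rho_{AB}]\big\|_1,$$ where the minimum is over orthonormal bases $\{|a_0\rangle,|a_1\rangle\}$ of $A$ and $\Pi_{\{|a_k\rangle\}}[X]=\sum_{k=0}^1(|a_k\rangle\langle a_k|\otimes\mathbb I_B)X(|a_k\rangle\langle a_k|\otimes\mathbb I_B)$ is the complete projective measurement (dephasing) on $A$ in that basis.
   Context: $\|\cdot\|_1$ is the trace norm. The negativity of a bipartite state $\tau_{X:Y}$ is $\mathcal N_{X:Y}(\tau)=(\|\tau^\Gamma\|_1-1)/2$ with $\tau^\Gamma$ the partial transpose on one party. For $A$ of dimension $m$ and an orthonormal basis $\{|a_k\rangle\}$ of $A$, the measurement interaction is the isometry $V:A\to A\otimes A'$ ($A'$ $m$-dimensional with computational basis $\{|k\rangle\}$), $V|a_k\rangle=|a_k\rangle|k\rangle$. The one-sided negativity of quantumness is $Q^A_{\mathcal N}(\rho_{AB})=\min\mathcal N_{AB:A'}\big((V\otimes\mathbb I_B)\rho_{AB}(V\otimes\mathbb I_B)^\dagger\big)$ over all orthonormal bases of $A$. *)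

theory Defs
  imports "Jordan_Normal_Form.Schur_Decomposition" "Jordan_Normal_Form.Char_Poly"
begin

(* Finite-dimensional operators are complex matrices (JNF type complex mat).
   Composite systems use the Kronecker convention: in X \<otimes> Y the index (x,y)
   is stored at x * dim Y + y. *)

definition kron :: "complex mat \<Rightarrow> complex mat \<Rightarrow> complex mat" where
  "kron A B = mat (dim_row A * dim_row B) (dim_col A * dim_col B)
     (\<lambda>(i,j). A $$ (i div dim_row B, j div dim_col B) * B $$ (i mod dim_row B, j mod dim_col B))"

(* trace norm = sum of singular values = sum of square roots of the eigenvalues
   (with algebraic multiplicity) of X^dagger X *)
definition trace_norm :: "complex mat \<Rightarrow> real" where
  "trace_norm X = (let es = (SOME es. char_poly (mat_adjoint X * X) = (\<Prod>e\<leftarrow>es. [:- e, 1:]))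
                   in (\<Sum>e\<leftarrow>es. sqrt (Re e)))"

definition psd :: "complex mat \<Rightarrow> bool" where
  "psd M \<longleftrightarrow> mat_adjoint M = M \<and>
     (\<forall>v. dim_vec v = dim_col M \<longrightarrow>
        Im (conjugate v \<bullet> (M *\<^sub>v v)) = 0 \<and> Re (conjugate v \<bullet> (M *\<^sub>v v)) \<ge> 0)"

definition mtrace :: "complex mat \<Rightarrow> complex" where
  "mtrace M = (\<Sum>i<dim_row M. M $$ (i,i))"

definition density :: "nat \<Rightarrow> complex mat \<Rightarrow> bool" where
  "density d \<rho> \<longleftrightarrow> \<rho> \<in> carrier_mat d d \<and> psd \<rho> \<and> mtrace \<rho> = 1"

(* orthonormal bases {|a_0>,|a_1>} of the qubit A = columns of a 2x2 unitary *)
definition unitary2 :: "complex mat \<Rightarrow> bool" where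
  "unitary2 U \<longleftrightarrow> U \<in> carrier_mat 2 2 \<and> mat_adjoint U * U = 1\<^sub>m 2"

definition proj :: "complex vec \<Rightarrow> complex mat" where
  "proj a = mat (dim_vec a) (dim_vec a) (\<lambda>(i,j). a $ i * cnj (a $ j))"

definition ket :: "nat \<Rightarrow> nat \<Rightarrow> complex mat" where
  "ket m k = mat m 1 (\<lambda>(i,j). if i = k then 1 else 0)"

(* (V \<otimes> I_B) : A \<otimes> B \<rightarrow> (A \<otimes> B) \<otimes> A',  |a_k>|b> \<mapsto> |a_k>|b>|k>,
   with V|a_k> = |a_k>|k>, written as  \<Sum>_k (|a_k><a_k| \<otimes> I_B) \<otimes> |k>  *)
definition meas_iso :: "complex mat \<Rightarrow> nat \<Rightarrow> complex mat" where
  "meas_iso U n = kron (kron (proj (col U 0)) (1\<^sub>m n)) (ket 2 0)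
                + kron (kron (proj (col U 1)) (1\<^sub>m n)) (ket 2 1)"

definition partial_transpose2 :: "nat \<Rightarrow> nat \<Rightarrow> complex mat \<Rightarrow> complex mat" where
  "partial_transpose2 d1 d2 M = mat (d1 * d2) (d1 * d2)
     (\<lambda>(i,j). M $$ ((i div d2) * d2 + j mod d2, (j div d2) * d2 + i mod d2))"

definition negativity :: "nat \<Rightarrow> nat \<Rightarrow> complex mat \<Rightarrow> real" where
  "negativity d1 d2 \<tau> = (trace_norm (partial_transpose2 d1 d2 \<tau>) - 1) / 2"

(* one-sided negativity of quantumness, A a qubit, dim B = n *)
definition Q_neg :: "nat \<Rightarrow> complex mat \<Rightarrow> real" where
  "Q_neg n \<rho> = Inf {negativity (2 * n) 2 (meas_iso U n * \<rho> * mat_adjoint (meas_iso U n)) | U. unitary2 U}"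

definition dephase :: "complex mat \<Rightarrow> nat \<Rightarrow> complex mat \<Rightarrow> complex mat" where
  "dephase U n X =
     kron (proj (col U 0)) (1\<^sub>m n) * X * kron (proj (col U 0)) (1\<^sub>m n)
   + kron (proj (col U 1)) (1\<^sub>m n) * X * kron (proj (col U 1)) (1\<^sub>m n)"

end

theory Submission
  imports Defs
begin

text \<open>
  Fix the basis given by the unitary \<open>U\<close>, put \<open>V = U \<otimes> I\<^sub>B\<close> and \<open>R = V\<^sup>\<dagger> \<rho> V\<close>. The measurement
  isometry factors as \<open>V\<^sub>U = (V \<otimes> I) V\<^sub>1 V\<^sup>\<dagger>\<close>, and a partial transpose on \<open>A'\<close> commutes with operators
  acting on \<open>AB\<close>, so the partial transpose of the measured state of \<open>\<rho>\<close> is unitarily equivalent to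
  that of the measured state of \<open>R\<close> in the computational basis. There its entry at \<open>((x, c), (y, d))\<close>
  is \<open>R\<^sub>x\<^sub>y\<close> if \<open>d\<close> is the block of \<open>x\<close> and \<open>c\<close> the block of \<open>y\<close>, and \<open>0\<close> otherwise. Sorting the
  index pairs \<open>(x, c)\<close> by whether \<open>c\<close> is the block of \<open>x\<close> exhibits it as the direct sum of the
  dephased state \<open>\<Pi>[R]\<close>, a density matrix of trace norm 1, and of \<open>R - \<Pi>[R]\<close>, which is unitarily
  equivalent to \<open>\<rho> - \<Pi>\<^sub>U[\<rho>]\<close>. Hence the negativity equals \<open>\<parallel>\<rho> - \<Pi>\<^sub>U[\<rho>]\<parallel>\<^sub>1 / 2\<close> basis by basis.
\<close>

section \<open>Adjoints, traces and Kronecker products\<close>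

lemma mat_adjoint_eq_mat: "mat_adjoint (A :: complex mat) = mat (dim_col A) (dim_row A) (\<lambda>(i,j). cnj (A $$ (j,i)))"
  by (rule eq_matI) (auto simp: mat_adjoint_def mat_of_rows_def)

lemma mat_adjoint_index [simp]:
  "i < dim_col A \<Longrightarrow> j < dim_row A \<Longrightarrow> mat_adjoint (A :: complex mat) $$ (i,j) = cnj (A $$ (j,i))"
  unfolding mat_adjoint_eq_mat by simp

lemma mat_adjoint_dim [simp]:
  "dim_row (mat_adjoint (A :: complex mat)) = dim_col A" "dim_col (mat_adjoint (A :: complex mat)) = dim_row A"
  unfolding mat_adjoint_eq_mat by simp_all

lemma mat_adjoint_carrier_mat [simp]: "(A :: complex mat) \<in> carrier_mat r c \<Longrightarrow> mat_adjoint A \<in> carrier_mat c r"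
  unfolding carrier_mat_def by simp

lemma mat_adjoint_mat_adjoint [simp]: "mat_adjoint (mat_adjoint A) = (A :: complex mat)"
  by (rule eq_matI) auto

lemma mat_adjoint_one [simp]: "mat_adjoint (1\<^sub>m k) = (1\<^sub>m k :: complex mat)"
  by (rule eq_matI) auto

lemma mat_adjoint_mult:
  assumes "(A :: complex mat) \<in> carrier_mat r k" "B \<in> carrier_mat k c"
  shows "mat_adjoint (A * B) = mat_adjoint B * mat_adjoint A"
  using assms by (intro eq_matI) (auto simp: scalar_prod_def mult.commute)

lemma mat_adjoint_add:
  assumes "(A :: complex mat) \<in> carrier_mat r c" "B \<in> carrier_mat r c"
  shows "mat_adjoint (A + B) = mat_adjoint A + mat_adjoint B"
  using assms by (intro eq_matI) auto

lemma mat_adjoint_conj: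
  assumes "V \<in> carrier_mat k m" "(X :: complex mat) \<in> carrier_mat m m"
  shows "mat_adjoint (V * X * mat_adjoint V) = V * mat_adjoint X * mat_adjoint V"
  using assms by (simp add: mat_adjoint_mult[of _ k m _ k] mat_adjoint_mult[of _ m m _ k]
                            assoc_mult_mat[of _ k m _ m _ k])

lemma mult_conj_mat_adjoint:
  assumes A: "(A :: complex mat) \<in> carrier_mat a b" and B: "B \<in> carrier_mat b c" and X: "X \<in> carrier_mat c c"
  shows "A * B * X * mat_adjoint (A * B) = A * (B * X * mat_adjoint B) * mat_adjoint A"
proof -
  have Aa: "mat_adjoint A \<in> carrier_mat b a" and Ba: "mat_adjoint B \<in> carrier_mat c b"
    using A B by simp_all
  have BX: "B * X \<in> carrier_mat b c"
    using B X by (rule mult_carrier_mat)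
  have "A * B * X * mat_adjoint (A * B) = A * (B * X) * (mat_adjoint B * mat_adjoint A)"
    using assoc_mult_mat[OF A B X] mat_adjoint_mult[OF A B] by simp
  also have "\<dots> = A * ((B * X) * (mat_adjoint B * mat_adjoint A))"
    by (rule assoc_mult_mat[OF A BX mult_carrier_mat[OF Ba Aa]])
  also have "(B * X) * (mat_adjoint B * mat_adjoint A) = (B * X * mat_adjoint B) * mat_adjoint A"
    by (rule assoc_mult_mat[OF BX Ba Aa, symmetric])
  also have "A * ((B * X * mat_adjoint B) * mat_adjoint A) = A * (B * X * mat_adjoint B) * mat_adjoint A"
    by (rule assoc_mult_mat[OF A mult_carrier_mat[OF BX Ba] Aa, symmetric])
  finally show ?thesis .
qed

lemma mult_add_mult_distrib:
  assumes V: "(V :: complex mat) \<in> carrier_mat m k" and A: "A \<in> carrier_mat k l" and B: "B \<in> carrier_mat k l"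
    and W: "W \<in> carrier_mat l p"
  shows "V * A * W + V * B * W = V * (A + B) * W"
  using add_mult_distrib_mat[OF mult_carrier_mat[OF V A] mult_carrier_mat[OF V B] W]
    mult_add_distrib_mat[OF V A B] by simp

lemma mult_minus_mult_distrib:
  assumes V: "(V :: complex mat) \<in> carrier_mat m k" and A: "A \<in> carrier_mat k l" and B: "B \<in> carrier_mat k l"
    and W: "W \<in> carrier_mat l p"
  shows "V * A * W - V * B * W = V * (A - B) * W"
  using minus_mult_distrib_mat[OF mult_carrier_mat[OF V A] mult_carrier_mat[OF V B] W]
    mult_minus_distrib_mat[OF V A B] by simp

lemma mtrace_mult_comm:
  assumes "A \<in> carrier_mat r c" "B \<in> carrier_mat c r"
  shows "mtrace (A * B) = mtrace (B * A)"
  using assms unfolding mtrace_def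
  by (simp add: scalar_prod_def lessThan_atLeast0[symmetric] sum.swap[of _ "{..<c}"] mult.commute)

lemma sum_lessThan_mult_nat: "(\<Sum>t<a * b. f t) = (\<Sum>p<a. \<Sum>q<b. f (p * b + q :: nat))"
proof -
  have "(\<Sum>t\<in>{p*b..<p*b+b}. f t) = (\<Sum>q<b. f (p * b + q))" for p
    using sum.shift_bounds_nat_ivl[of f 0 "p*b" b] by (simp add: atLeast0LessThan add.commute)
  then show ?thesis
    using sum.nat_group[of f b a] by simp
qed

lemma mult_add_less_mult_nat: "p < a \<Longrightarrow> q < b \<Longrightarrow> p * b + q < a * (b :: nat)"
proof -
  assume "p < a" "q < b"
  then have "p * b + q < Suc p * b" by simp
  also have "\<dots> \<le> a * b" using \<open>p < a\<close> by (intro mult_le_mono1) simp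
  finally show ?thesis .
qed

lemma index_kron [simp]:
  "i < dim_row A * dim_row B \<Longrightarrow> j < dim_col A * dim_col B \<Longrightarrow>
   kron A B $$ (i,j) = A $$ (i div dim_row B, j div dim_col B) * B $$ (i mod dim_row B, j mod dim_col B)"
  and dim_kron [simp]: "dim_row (kron A B) = dim_row A * dim_row B" "dim_col (kron A B) = dim_col A * dim_col B"
  unfolding kron_def by simp_all

lemma kron_carrier_mat [simp]:
  "A \<in> carrier_mat r1 c1 \<Longrightarrow> B \<in> carrier_mat r2 c2 \<Longrightarrow> kron A B \<in> carrier_mat (r1 * r2) (c1 * c2)"
  unfolding carrier_mat_def by simp

lemma kron_mult:
  assumes A: "A \<in> carrier_mat r1 c1" and B: "B \<in> carrier_mat r2 c2"
    and C: "C \<in> carrier_mat c1 k1" and D: "D \<in> carrier_mat c2 k2"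
  shows "kron A B * kron C D = kron (A * C) (B * D)"
proof (rule eq_matI)
  fix i j assume "i < dim_row (kron (A * C) (B * D))" "j < dim_col (kron (A * C) (B * D))"
  then have i: "i < r1 * r2" and j: "j < k1 * k2" using A B C D by auto
  then have "r2 > 0" "k2 > 0" by (auto intro: gr0I)
  have split: "p * c2 + q < c1 * c2" "(p * c2 + q) div c2 = p" "(p * c2 + q) mod c2 = q"
    if "p < c1" "q < c2" for p q
    using that by (auto intro: mult_add_less_mult_nat)
  have "(kron A B * kron C D) $$ (i,j) = (\<Sum>t<c1*c2. kron A B $$ (i,t) * kron C D $$ (t,j))"
    using A B C D i j by (simp add: scalar_prod_def lessThan_atLeast0)
  also have "\<dots> = (\<Sum>p<c1. \<Sum>q<c2. (A $$ (i div r2, p) * C $$ (p, j div k2)) * (B $$ (i mod r2, q) * D $$ (q, j mod k2)))"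
    unfolding sum_lessThan_mult_nat using A B C D i j split by (intro sum.cong refl) (simp add: mult_ac)
  also have "\<dots> = (\<Sum>p<c1. A $$ (i div r2, p) * C $$ (p, j div k2)) * (\<Sum>q<c2. B $$ (i mod r2, q) * D $$ (q, j mod k2))"
    by (simp only: sum_product)
  also have "\<dots> = kron (A * C) (B * D) $$ (i,j)"
    using A B C D i j \<open>r2 > 0\<close> \<open>k2 > 0\<close> by (simp add: scalar_prod_def lessThan_atLeast0 less_mult_imp_div_less)
  finally show "(kron A B * kron C D) $$ (i,j) = kron (A * C) (B * D) $$ (i,j)" .
qed (use A B C D in auto)

lemma kron_mat_adjoint: "mat_adjoint (kron A B) = kron (mat_adjoint A) (mat_adjoint B)"
proof (rule eq_matI)
  fix i j assume "i < dim_row (kron (mat_adjoint A) (mat_adjoint B))" "j < dim_col (kron (mat_adjoint A) (mat_adjoint B))"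
  then have i: "i < dim_col A * dim_col B" and j: "j < dim_row A * dim_row B" by auto
  then have "dim_col B > 0" "dim_row B > 0" by (auto intro: gr0I)
  then show "mat_adjoint (kron A B) $$ (i, j) = kron (mat_adjoint A) (mat_adjoint B) $$ (i, j)"
    using i j by (simp add: less_mult_imp_div_less)
qed auto

lemma kron_one_one: "kron (1\<^sub>m a) (1\<^sub>m b) = 1\<^sub>m (a * b)"
proof (rule eq_matI)
  fix i j assume "i < dim_row (1\<^sub>m (a * b))" "j < dim_col (1\<^sub>m (a * b))"
  then have i: "i < a * b" and j: "j < a * b" by auto
  then have "b > 0" by (auto intro: gr0I)
  moreover have "(i div b = j div b \<and> i mod b = j mod b) = (i = j)"
    by (metis div_mult_mod_eq)
  ultimately show "kron (1\<^sub>m a) (1\<^sub>m b) $$ (i, j) = 1\<^sub>m (a * b) $$ (i, j)"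
    using i j by (auto simp: less_mult_imp_div_less)
qed auto

lemma kron_one_right [simp]: "kron X (1\<^sub>m 1) = X"
  by (rule eq_matI) auto

lemma kron_mult_mult_one:
  assumes A: "A \<in> carrier_mat r a" and B: "B \<in> carrier_mat a b" and C: "C \<in> carrier_mat b c"
    and v: "v \<in> carrier_mat p q"
  shows "kron (A * B * C) v = kron A (1\<^sub>m p) * kron B v * kron C (1\<^sub>m q)"
  using kron_mult[OF A one_carrier_mat B v] kron_mult[OF mult_carrier_mat[OF A B] v C one_carrier_mat] v
  by simp

section \<open>Local operators and the partial transpose\<close>

lemma kron_one_mult_index:
  assumes X: "X \<in> carrier_mat a b" and Y: "Y \<in> carrier_mat (b * d) c" and i: "i < a * d" and j: "j < c"
  shows "(kron X (1\<^sub>m d) * Y) $$ (i,j) = (\<Sum>p<b. X $$ (i div d, p) * Y $$ (p * d + i mod d, j))"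
proof -
  have "d > 0" using i by (auto intro: gr0I)
  have K: "kron X (1\<^sub>m d) $$ (i, p * d + q) = (if q = i mod d then X $$ (i div d, p) else 0)"
    if "p < b" "q < d" for p q
    using X i that by (auto simp: mult_add_less_mult_nat)
  have "(kron X (1\<^sub>m d) * Y) $$ (i,j) = (\<Sum>t<b * d. kron X (1\<^sub>m d) $$ (i, t) * Y $$ (t, j))"
    using X Y i j by (simp add: scalar_prod_def lessThan_atLeast0 del: index_kron)
  also have "\<dots> = (\<Sum>p<b. \<Sum>q<d. kron X (1\<^sub>m d) $$ (i, p * d + q) * Y $$ (p * d + q, j))"
    by (rule sum_lessThan_mult_nat)
  also have "\<dots> = (\<Sum>p<b. \<Sum>q<d. if q = i mod d then X $$ (i div d, p) * Y $$ (p * d + i mod d, j) else 0)"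
    using K by (intro sum.cong refl) auto
  finally show ?thesis
    using \<open>d > 0\<close> by simp
qed

lemma mult_kron_one_index:
  assumes X: "X \<in> carrier_mat a b" and Y: "Y \<in> carrier_mat c (a * d)" and i: "i < c" and j: "j < b * d"
  shows "(Y * kron X (1\<^sub>m d)) $$ (i,j) = (\<Sum>p<a. Y $$ (i, p * d + j mod d) * X $$ (p, j div d))"
proof -
  have "d > 0" using j by (auto intro: gr0I)
  have K: "kron X (1\<^sub>m d) $$ (p * d + q, j) = (if q = j mod d then X $$ (p, j div d) else 0)"
    if "p < a" "q < d" for p q
    using X j that by (auto simp: mult_add_less_mult_nat)
  have "(Y * kron X (1\<^sub>m d)) $$ (i,j) = (\<Sum>t<a * d. Y $$ (i, t) * kron X (1\<^sub>m d) $$ (t, j))"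
    using X Y i j by (simp add: scalar_prod_def lessThan_atLeast0 del: index_kron)
  also have "\<dots> = (\<Sum>p<a. \<Sum>q<d. Y $$ (i, p * d + q) * kron X (1\<^sub>m d) $$ (p * d + q, j))"
    by (rule sum_lessThan_mult_nat)
  also have "\<dots> = (\<Sum>p<a. \<Sum>q<d. if q = j mod d then Y $$ (i, p * d + j mod d) * X $$ (p, j div d) else 0)"
    using K by (intro sum.cong refl) auto
  finally show ?thesis
    using \<open>d > 0\<close> by simp
qed

lemma partial_transpose2_index:
  "i < d1 * d2 \<Longrightarrow> j < d1 * d2 \<Longrightarrow>
   partial_transpose2 d1 d2 M $$ (i,j) = M $$ (i div d2 * d2 + j mod d2, j div d2 * d2 + i mod d2)"
  by (simp add: partial_transpose2_def)

lemma partial_transpose2_carrier_mat [simp]: "partial_transpose2 d1 d2 M \<in> carrier_mat (d1 * d2) (d1 * d2)"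
  by (simp add: partial_transpose2_def)

lemma swap_index_less:
  assumes "i < d1 * d2" "j < d1 * (d2 :: nat)"
  shows "i div d2 * d2 + j mod d2 < d1 * d2" "(i div d2 * d2 + j mod d2) div d2 = i div d2"
    "(i div d2 * d2 + j mod d2) mod d2 = j mod d2"
proof -
  have "d2 > 0" using assms by (auto intro: gr0I)
  then show "i div d2 * d2 + j mod d2 < d1 * d2"
    using assms by (simp add: mult_add_less_mult_nat less_mult_imp_div_less)
  show "(i div d2 * d2 + j mod d2) div d2 = i div d2" "(i div d2 * d2 + j mod d2) mod d2 = j mod d2"
    using \<open>d2 > 0\<close> by simp_all
qed

lemma partial_transpose2_kron_one_mult:
  assumes X: "X \<in> carrier_mat d1 d1" and Y: "Y \<in> carrier_mat (d1 * d2) (d1 * d2)"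
  shows "partial_transpose2 d1 d2 (kron X (1\<^sub>m d2) * Y) = kron X (1\<^sub>m d2) * partial_transpose2 d1 d2 Y"
proof (rule eq_matI)
  fix i j assume "i < dim_row (kron X (1\<^sub>m d2) * partial_transpose2 d1 d2 Y)"
    "j < dim_col (kron X (1\<^sub>m d2) * partial_transpose2 d1 d2 Y)"
  then have i: "i < d1 * d2" and j: "j < d1 * d2" using X by (auto simp: partial_transpose2_def)
  have "partial_transpose2 d1 d2 (kron X (1\<^sub>m d2) * Y) $$ (i, j)
      = (\<Sum>p<d1. X $$ (i div d2, p) * Y $$ (p * d2 + j mod d2, j div d2 * d2 + i mod d2))"
    using X Y i j swap_index_less[OF i j] swap_index_less[OF j i]
    by (simp add: partial_transpose2_index kron_one_mult_index del: index_mult_mat)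
  also have "\<dots> = (\<Sum>p<d1. X $$ (i div d2, p) * partial_transpose2 d1 d2 Y $$ (p * d2 + i mod d2, j))"
  proof (intro sum.cong refl)
    fix p assume "p \<in> {..<d1}"
    moreover have "d2 > 0" using i by (auto intro: gr0I)
    ultimately have "p * d2 + i mod d2 < d1 * d2" "(p * d2 + i mod d2) div d2 = p" "(p * d2 + i mod d2) mod d2 = i mod d2"
      by (simp_all add: mult_add_less_mult_nat)
    then show "X $$ (i div d2, p) * Y $$ (p * d2 + j mod d2, j div d2 * d2 + i mod d2)
      = X $$ (i div d2, p) * partial_transpose2 d1 d2 Y $$ (p * d2 + i mod d2, j)"
      using j by (simp add: partial_transpose2_index)
  qed
  also have "\<dots> = (kron X (1\<^sub>m d2) * partial_transpose2 d1 d2 Y) $$ (i, j)"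
    by (rule kron_one_mult_index[OF X _ i j, symmetric]) simp
  finally show "partial_transpose2 d1 d2 (kron X (1\<^sub>m d2) * Y) $$ (i, j)
    = (kron X (1\<^sub>m d2) * partial_transpose2 d1 d2 Y) $$ (i, j)" .
qed (use X in \<open>simp_all add: partial_transpose2_def\<close>)

lemma partial_transpose2_mult_kron_one:
  assumes X: "X \<in> carrier_mat d1 d1" and Y: "Y \<in> carrier_mat (d1 * d2) (d1 * d2)"
  shows "partial_transpose2 d1 d2 (Y * kron X (1\<^sub>m d2)) = partial_transpose2 d1 d2 Y * kron X (1\<^sub>m d2)"
proof (rule eq_matI)
  fix i j assume "i < dim_row (partial_transpose2 d1 d2 Y * kron X (1\<^sub>m d2))"
    "j < dim_col (partial_transpose2 d1 d2 Y * kron X (1\<^sub>m d2))"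
  then have i: "i < d1 * d2" and j: "j < d1 * d2" using X by (auto simp: partial_transpose2_def)
  have "partial_transpose2 d1 d2 (Y * kron X (1\<^sub>m d2)) $$ (i, j)
      = (\<Sum>p<d1. Y $$ (i div d2 * d2 + j mod d2, p * d2 + i mod d2) * X $$ (p, j div d2))"
    using X Y i j swap_index_less[OF i j] swap_index_less[OF j i]
    by (simp add: partial_transpose2_index mult_kron_one_index del: index_mult_mat)
  also have "\<dots> = (\<Sum>p<d1. partial_transpose2 d1 d2 Y $$ (i, p * d2 + j mod d2) * X $$ (p, j div d2))"
  proof (intro sum.cong refl)
    fix p assume "p \<in> {..<d1}"
    moreover have "d2 > 0" using i by (auto intro: gr0I)
    ultimately have "p * d2 + j mod d2 < d1 * d2" "(p * d2 + j mod d2) div d2 = p" "(p * d2 + j mod d2) mod d2 = j mod d2"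
      by (simp_all add: mult_add_less_mult_nat)
    then show "Y $$ (i div d2 * d2 + j mod d2, p * d2 + i mod d2) * X $$ (p, j div d2)
      = partial_transpose2 d1 d2 Y $$ (i, p * d2 + j mod d2) * X $$ (p, j div d2)"
      using i by (simp add: partial_transpose2_index)
  qed
  also have "\<dots> = (partial_transpose2 d1 d2 Y * kron X (1\<^sub>m d2)) $$ (i, j)"
    by (rule mult_kron_one_index[OF X _ i j, symmetric]) simp
  finally show "partial_transpose2 d1 d2 (Y * kron X (1\<^sub>m d2)) $$ (i, j)
    = (partial_transpose2 d1 d2 Y * kron X (1\<^sub>m d2)) $$ (i, j)" .
qed (use X in \<open>simp_all add: partial_transpose2_def\<close>)

lemma partial_transpose2_kron_one_conj:
  assumes X: "X \<in> carrier_mat d1 d1" and Y: "Y \<in> carrier_mat (d1 * d2) (d1 * d2)"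
  shows "partial_transpose2 d1 d2 (kron X (1\<^sub>m d2) * Y * mat_adjoint (kron X (1\<^sub>m d2)))
       = kron X (1\<^sub>m d2) * partial_transpose2 d1 d2 Y * mat_adjoint (kron X (1\<^sub>m d2))"
proof -
  have "mat_adjoint (kron X (1\<^sub>m d2)) = kron (mat_adjoint X) (1\<^sub>m d2)"
    by (simp add: kron_mat_adjoint)
  moreover have "kron X (1\<^sub>m d2) * Y \<in> carrier_mat (d1 * d2) (d1 * d2)"
    using kron_carrier_mat[OF X one_carrier_mat] Y by (rule mult_carrier_mat)
  ultimately show ?thesis
    using X Y by (simp add: partial_transpose2_mult_kron_one partial_transpose2_kron_one_mult)
qed

section \<open>Unitaries and the trace norm\<close>

definition unitary :: "nat \<Rightarrow> complex mat \<Rightarrow> bool" where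
  "unitary k V \<longleftrightarrow> V \<in> carrier_mat k k \<and> mat_adjoint V * V = 1\<^sub>m k"

lemma unitary2_iff_unitary: "unitary2 U \<longleftrightarrow> unitary 2 U"
  by (simp add: unitary2_def unitary_def)

lemma unitary_carrier_mat: "unitary k V \<Longrightarrow> V \<in> carrier_mat k k"
  by (simp add: unitary_def)

lemma unitary_left_inverse: "unitary k V \<Longrightarrow> mat_adjoint V * V = 1\<^sub>m k"
  by (simp add: unitary_def)

lemma unitary_right_inverse: "unitary k V \<Longrightarrow> V * mat_adjoint V = 1\<^sub>m k"
  unfolding unitary_def by (auto intro: mat_mult_left_right_inverse)

lemma unitary_kron_one: "unitary k V \<Longrightarrow> unitary (k * m) (kron V (1\<^sub>m m))"
  unfolding unitary_def
  by (simp add: kron_mat_adjoint kron_mult[of _ k k _ m m _ k _ m] kron_one_one)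

lemma isometry_conj_mult:
  assumes V: "V \<in> carrier_mat m k" and VV: "mat_adjoint V * V = 1\<^sub>m k"
    and A: "(A :: complex mat) \<in> carrier_mat k k" and B: "B \<in> carrier_mat k k"
  shows "(V * A * mat_adjoint V) * (V * B * mat_adjoint V) = V * (A * B) * mat_adjoint V"
proof -
  have Va: "mat_adjoint V \<in> carrier_mat k m" using V by simp
  have "mat_adjoint V * (V * (B * mat_adjoint V)) = (mat_adjoint V * V) * (B * mat_adjoint V)"
    using V Va B by (simp add: assoc_mult_mat[of _ k m _ k _ m])
  also have "\<dots> = B * mat_adjoint V"
    using VV B Va by simp
  finally have cancel: "mat_adjoint V * (V * (B * mat_adjoint V)) = B * mat_adjoint V" .
  have Z: "V * (B * mat_adjoint V) \<in> carrier_mat m m" using V Va B by simp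
  have "(V * A * mat_adjoint V) * (V * B * mat_adjoint V) = V * (A * (mat_adjoint V * (V * (B * mat_adjoint V))))"
    using V Va A B Z by (simp add: assoc_mult_mat[of _ m k _ k _ m] assoc_mult_mat[of _ m k _ m _ m]
        assoc_mult_mat[of _ k k _ m _ m])
  then show ?thesis
    using V Va A B cancel by (simp add: assoc_mult_mat[of _ m k _ k _ m] assoc_mult_mat[of _ k k _ k _ m])
qed

lemma unitary_conj_mat_adjoint_conj:
  assumes V: "unitary k V" and X: "X \<in> carrier_mat k k"
  shows "V * (mat_adjoint V * X * V) * mat_adjoint V = X"
proof -
  have "V * (mat_adjoint V * X * V) * mat_adjoint V = (V * mat_adjoint V) * X * (V * mat_adjoint V)"
    using unitary_carrier_mat[OF V] X
    by (simp add: assoc_mult_mat[of _ k k _ k _ k] mult_carrier_mat[of _ k k _ k])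
  then show ?thesis
    using X unitary_right_inverse[OF V] by simp
qed

lemma proots_linear_factors: "proots (\<Prod>e\<leftarrow>es. [:- e, 1:]) = mset (es :: 'a :: idom list)"
proof (induction es)
  case (Cons e es)
  have "proots [:- e, 1:] = {#e#}"
    using proots_linear_factor[of "- e"] by simp
  then show ?case
    by (simp only: list.map prod_list.Cons, subst proots_mult) (use Cons in auto)
qed simp

lemma trace_norm_eq_sum_sqrt:
  assumes "char_poly (mat_adjoint X * X) = (\<Prod>e\<leftarrow>es. [:- e, 1:])"
  shows "trace_norm X = (\<Sum>e\<leftarrow>es. sqrt (Re e))"
proof -
  define fs where "fs = (SOME fs. char_poly (mat_adjoint X * X) = (\<Prod>e\<leftarrow>fs. [:- e, 1:]))"
  have "char_poly (mat_adjoint X * X) = (\<Prod>e\<leftarrow>fs. [:- e, 1:])"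
    unfolding fs_def using assms by (rule someI)
  then have "mset fs = mset es"
    using assms proots_linear_factors by metis
  then have "(\<Sum>e\<leftarrow>fs. sqrt (Re e)) = (\<Sum>e\<leftarrow>es. sqrt (Re e))"
    by (metis mset_map sum_mset_sum_list)
  then show ?thesis
    unfolding trace_norm_def Let_def fs_def .
qed

lemma trace_norm_unitary_conj:
  assumes V: "unitary k V" and X: "X \<in> carrier_mat k k"
  shows "trace_norm (V * X * mat_adjoint V) = trace_norm X"
proof -
  have Vc: "V \<in> carrier_mat k k" and Va: "mat_adjoint V \<in> carrier_mat k k"
    using unitary_carrier_mat[OF V] by simp_all
  have "mat_adjoint (V * X * mat_adjoint V) * (V * X * mat_adjoint V) = V * (mat_adjoint X * X) * mat_adjoint V"
    unfolding mat_adjoint_conj[OF Vc X]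
    by (rule isometry_conj_mult[OF Vc unitary_left_inverse[OF V]]) (use X in simp_all)
  moreover have "similar_mat (V * (mat_adjoint X * X) * mat_adjoint V) (mat_adjoint X * X)"
  proof (rule similar_matI[of _ _ _ _ k])
    have "mat_adjoint X * X \<in> carrier_mat k k" using mat_adjoint_carrier_mat[OF X] X by (rule mult_carrier_mat)
    then show "{V * (mat_adjoint X * X) * mat_adjoint V, mat_adjoint X * X, V, mat_adjoint V} \<subseteq> carrier_mat k k"
      using Vc Va by auto
  qed (use unitary_left_inverse[OF V] unitary_right_inverse[OF V] in simp_all)
  ultimately show ?thesis
    unfolding trace_norm_def by (simp add: char_poly_similar)
qed

lemma trace_norm_block_diag:
  assumes A: "A \<in> carrier_mat a a" and B: "B \<in> carrier_mat b b"
  shows "trace_norm (four_block_mat A (0\<^sub>m a b) (0\<^sub>m b a) B) = trace_norm A + trace_norm B"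
proof -
  let ?M = "four_block_mat A (0\<^sub>m a b) (0\<^sub>m b a) B"
  have AA: "mat_adjoint A * A \<in> carrier_mat a a" and BB: "mat_adjoint B * B \<in> carrier_mat b b"
    using A B by auto
  have "mat_adjoint ?M = four_block_mat (mat_adjoint A) (0\<^sub>m a b) (0\<^sub>m b a) (mat_adjoint B)"
    using A B by (intro eq_matI) auto
  then have "mat_adjoint ?M * ?M = four_block_mat (mat_adjoint A * A) (0\<^sub>m a b) (0\<^sub>m b a) (mat_adjoint B * B)"
    using A B AA BB by (simp add: mult_four_block_mat[OF mat_adjoint_carrier_mat[OF A] _ _ mat_adjoint_carrier_mat[OF B] A _ _ B])
  moreover obtain es where es: "char_poly (mat_adjoint A * A) = (\<Prod>e\<leftarrow>es. [:- e, 1:])"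
    using char_poly_factorized[OF AA] by blast
  moreover obtain fs where fs: "char_poly (mat_adjoint B * B) = (\<Prod>e\<leftarrow>fs. [:- e, 1:])"
    using char_poly_factorized[OF BB] by blast
  ultimately have "char_poly (mat_adjoint ?M * ?M) = (\<Prod>e\<leftarrow>es @ fs. [:- e, 1:])"
    using char_poly_0_block[OF refl _ _ AA _ BB] by fastforce
  then have "trace_norm ?M = (\<Sum>e\<leftarrow>es @ fs. sqrt (Re e))"
    by (rule trace_norm_eq_sum_sqrt)
  then show ?thesis
    using trace_norm_eq_sum_sqrt[OF es] trace_norm_eq_sum_sqrt[OF fs] by simp
qed

section \<open>Positive semidefinite matrices\<close>

lemma conjugate_scalar_prod_mat_adjoint:
  assumes A: "(A :: complex mat) \<in> carrier_mat m k" and v: "v \<in> carrier_vec k" and w: "w \<in> carrier_vec m"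
  shows "conjugate v \<bullet> (mat_adjoint A *\<^sub>v w) = conjugate (A *\<^sub>v v) \<bullet> w"
proof -
  have "conjugate v \<bullet> (mat_adjoint A *\<^sub>v w) = (\<Sum>i<k. cnj (v $ i) * (\<Sum>j<m. cnj (A $$ (j,i)) * w $ j))"
    using A v w by (simp add: scalar_prod_def lessThan_atLeast0 row_def)
  also have "\<dots> = (\<Sum>j<m. (\<Sum>i<k. cnj (A $$ (j,i)) * cnj (v $ i)) * w $ j)"
    by (simp add: sum_distrib_left sum_distrib_right sum.swap[of _ "{..<k}"] mult_ac)
  also have "\<dots> = conjugate (A *\<^sub>v v) \<bullet> w"
    using A v w by (simp add: scalar_prod_def lessThan_atLeast0 row_def)
  finally show ?thesis .
qed

lemma psd_hermitian: "psd M \<Longrightarrow> mat_adjoint M = M"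
  by (simp add: psd_def)

lemma psd_quadratic_form:
  "psd M \<Longrightarrow> dim_vec v = dim_col M \<Longrightarrow>
   Im (conjugate v \<bullet> (M *\<^sub>v v)) = 0 \<and> Re (conjugate v \<bullet> (M *\<^sub>v v)) \<ge> 0"
  by (simp add: psd_def)

lemma psd_congruence:
  assumes X: "X \<in> carrier_mat m m" and p: "psd X" and A: "A \<in> carrier_mat m k"
  shows "psd (mat_adjoint A * X * A)"
  unfolding psd_def
proof (intro conjI allI impI)
  have Aa: "mat_adjoint A \<in> carrier_mat k m" using A by simp
  show "mat_adjoint (mat_adjoint A * X * A) = mat_adjoint A * X * A"
  proof -
    have AX: "mat_adjoint A * X \<in> carrier_mat k m" using Aa X by (rule mult_carrier_mat)
    have "mat_adjoint (mat_adjoint A * X * A) = mat_adjoint A * (X * A)"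
      using mat_adjoint_mult[OF AX A] mat_adjoint_mult[OF Aa X] psd_hermitian[OF p] by simp
    also have "\<dots> = mat_adjoint A * X * A"
      using Aa X A by (rule assoc_mult_mat[symmetric])
    finally show ?thesis .
  qed
  fix v :: "complex vec" assume "dim_vec v = dim_col (mat_adjoint A * X * A)"
  then have v: "v \<in> carrier_vec k" using carrier_matD(2)[OF A] by (intro carrier_vecI) simp
  have Av: "A *\<^sub>v v \<in> carrier_vec m" using A v by simp
  have "(mat_adjoint A * X * A) *\<^sub>v v = mat_adjoint A *\<^sub>v (X *\<^sub>v (A *\<^sub>v v))"
    unfolding assoc_mult_mat_vec[OF mult_carrier_mat[OF Aa X] A v] assoc_mult_mat_vec[OF Aa X Av] ..
  then have "conjugate v \<bullet> ((mat_adjoint A * X * A) *\<^sub>v v)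
      = conjugate (A *\<^sub>v v) \<bullet> (X *\<^sub>v (A *\<^sub>v v))"
    using conjugate_scalar_prod_mat_adjoint[OF A v mult_mat_vec_carrier[OF X Av]] by simp
  moreover have "dim_vec (A *\<^sub>v v) = dim_col X"
    using A X by simp
  ultimately show "Im (conjugate v \<bullet> ((mat_adjoint A * X * A) *\<^sub>v v)) = 0"
    "Re (conjugate v \<bullet> ((mat_adjoint A * X * A) *\<^sub>v v)) \<ge> 0"
    using psd_quadratic_form[OF p] by simp_all
qed

lemma psd_add:
  assumes X: "X \<in> carrier_mat m m" and Y: "Y \<in> carrier_mat m m" and "psd X" "psd Y"
  shows "psd (X + Y)"
  unfolding psd_def
proof (intro conjI allI impI)
  show "mat_adjoint (X + Y) = X + Y"
    using mat_adjoint_add[OF X Y] assms by (simp add: psd_hermitian)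
  fix v :: "complex vec" assume "dim_vec v = dim_col (X + Y)"
  then have v: "v \<in> carrier_vec m" using carrier_matD(2)[OF Y] by (intro carrier_vecI) simp
  then have "conjugate v \<bullet> ((X + Y) *\<^sub>v v) = conjugate v \<bullet> (X *\<^sub>v v) + conjugate v \<bullet> (Y *\<^sub>v v)"
    using X Y by (simp add: add_mult_distrib_mat_vec scalar_prod_add_distrib[of _ m])
  moreover have "dim_vec v = dim_col X" "dim_vec v = dim_col Y"
    using v X Y by simp_all
  ultimately show "Im (conjugate v \<bullet> ((X + Y) *\<^sub>v v)) = 0" "Re (conjugate v \<bullet> ((X + Y) *\<^sub>v v)) \<ge> 0"
    using psd_quadratic_form[OF assms(3)] psd_quadratic_form[OF assms(4)] by simp_all
qed

lemma psd_eigenvalue: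
  assumes X: "X \<in> carrier_mat m m" and p: "psd X" and e: "eigenvalue X e"
  shows "Im e = 0 \<and> Re e \<ge> 0"
proof -
  obtain v where "eigenvector X v e" using e unfolding eigenvalue_def by blast
  then have v: "v \<in> carrier_vec m" and v0: "v \<noteq> 0\<^sub>v m" and Xv: "X *\<^sub>v v = e \<cdot>\<^sub>v v"
    unfolding eigenvector_def using X by auto
  have "conjugate v \<bullet> v > 0"
    using conjugate_square_greater_0_vec[OF v] v0 conjugate_vec_sprod_comm[OF v v] by simp
  then have nI: "Im (conjugate v \<bullet> v) = 0" and nR: "Re (conjugate v \<bullet> v) > 0"
    by (auto simp: less_complex_def)
  have "dim_vec v = dim_col X" using v X by simp
  then have "Im (conjugate v \<bullet> (X *\<^sub>v v)) = 0" "Re (conjugate v \<bullet> (X *\<^sub>v v)) \<ge> 0"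
    using psd_quadratic_form[OF p] by simp_all
  moreover have "conjugate v \<bullet> (X *\<^sub>v v) = e * (conjugate v \<bullet> v)"
    unfolding Xv using v by simp
  ultimately have "Im e * Re (conjugate v \<bullet> v) = 0" "Re e * Re (conjugate v \<bullet> v) \<ge> 0"
    using nI by simp_all
  then show ?thesis using nR by (simp add: zero_le_mult_iff)
qed

lemma upper_triangular_mult_self:
  assumes B: "B \<in> carrier_mat m m" and ut: "upper_triangular B"
  shows "upper_triangular (B * B)" "diag_mat (B * B) = map (\<lambda>e. e * e) (diag_mat B)"
proof -
  have z: "B $$ (i,j) = 0" if "i < m" "j < i" for i j
    using ut that B unfolding upper_triangular_def by auto
  have entry: "(B * B) $$ (i,j) = (\<Sum>k\<in>{i..j}. B $$ (i,k) * B $$ (k,j))" if "i < m" "j < m" for i j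
  proof -
    have "(B * B) $$ (i,j) = (\<Sum>k\<in>{0..<m}. B $$ (i,k) * B $$ (k,j))"
      using that B by (simp add: scalar_prod_def)
    also have "\<dots> = (\<Sum>k\<in>{i..j}. B $$ (i,k) * B $$ (k,j))"
      using that z by (intro sum.mono_neutral_right) auto
    finally show ?thesis .
  qed
  show "upper_triangular (B * B)"
    unfolding upper_triangular_def using B entry by auto
  show "diag_mat (B * B) = map (\<lambda>e. e * e) (diag_mat B)"
    unfolding diag_mat_def using B entry by simp
qed

lemma trace_norm_psd:
  assumes X: "X \<in> carrier_mat m m" and p: "psd X"
  shows "trace_norm X = Re (mtrace X)"
proof -
  obtain es where es: "char_poly X = (\<Prod>e\<leftarrow>es. [:- e, 1:])"
    using char_poly_factorized[OF X] by blast
  obtain B P Q where "schur_decomposition X es = (B,P,Q)"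
    by (cases "schur_decomposition X es") auto
  from schur_decomposition[OF X es this] have sim: "similar_mat_wit X B P Q"
    and ut: "upper_triangular B" and dg: "diag_mat B = es" by auto
  from sim X have B: "B \<in> carrier_mat m m" and P: "P \<in> carrier_mat m m" and Q: "Q \<in> carrier_mat m m"
    and PQ: "P * Q = 1\<^sub>m m" and QP: "Q * P = 1\<^sub>m m" and XB: "X = P * B * Q"
    unfolding similar_mat_wit_def Let_def by auto
  have "X * X = P * (B * (Q * P) * B) * Q"
    using P B Q by (simp add: XB assoc_mult_mat[of _ m m _ m _ m])
  then have "X * X = P * (B * B) * Q"
    using QP B by simp
  moreover have "X * X \<in> carrier_mat m m" "B * B \<in> carrier_mat m m"
    using X B by (simp_all add: mult_carrier_mat[of _ m m])
  ultimately have "similar_mat (X * X) (B * B)"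
    by (intro similar_matI[OF _ PQ QP]) (use P Q in auto)
  moreover have "char_poly (B * B) = (\<Prod>e\<leftarrow>map (\<lambda>e. e * e) es. [:- e, 1:])"
    using char_poly_upper_triangular[OF _ upper_triangular_mult_self(1)[OF B ut], of m] B
      upper_triangular_mult_self(2)[OF B ut] dg by simp
  ultimately have "trace_norm X = (\<Sum>e\<leftarrow>map (\<lambda>e. e * e) es. sqrt (Re e))"
    using psd_hermitian[OF p] by (intro trace_norm_eq_sum_sqrt) (simp add: char_poly_similar)
  also have "\<dots> = (\<Sum>e\<leftarrow>es. Re e)"
  proof -
    have "Im e = 0 \<and> Re e \<ge> 0" if "e \<in> set es" for e
      using psd_eigenvalue[OF X p] eigenvalue_root_char_poly[OF X] that
      by (simp add: es poly_prod_list)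
    then have "sqrt (Re (e * e)) = Re e" if "e \<in> set es" for e
      using that by (simp add: power2_eq_square[symmetric])
    then show ?thesis
      by (simp add: comp_def cong: map_cong)
  qed
  also have "\<dots> = Re (mtrace B)"
    using B by (simp add: dg[symmetric] diag_mat_def mtrace_def sum_list_sum_nth lessThan_atLeast0)
  also have "mtrace B = mtrace X"
    using mtrace_mult_comm[of "P * B" m m Q] P B Q QP
    by (simp add: XB assoc_mult_mat[symmetric, of Q m m P m B m])
  finally show ?thesis .
qed

lemma density_unitary_conj:
  assumes V: "unitary k V" and \<rho>: "density k \<rho>"
  shows "density k (mat_adjoint V * \<rho> * V)"
proof -
  have Vc: "V \<in> carrier_mat k k" and Va: "mat_adjoint V \<in> carrier_mat k k" and \<rho>c: "\<rho> \<in> carrier_mat k k"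
    using unitary_carrier_mat[OF V] \<rho> by (simp_all add: density_def)
  have "mtrace (mat_adjoint V * \<rho> * V) = mtrace (V * (mat_adjoint V * \<rho>))"
    by (rule mtrace_mult_comm[OF mult_carrier_mat[OF Va \<rho>c] Vc])
  also have "\<dots> = mtrace \<rho>"
    using assoc_mult_mat[OF Vc Va \<rho>c] unitary_right_inverse[OF V] \<rho>c by simp
  finally show ?thesis
    using \<rho> psd_congruence[OF \<rho>c _ Vc] mult_carrier_mat[OF mult_carrier_mat[OF Va \<rho>c] Vc]
    by (simp add: density_def)
qed

section \<open>Measurement and dephasing in the computational basis\<close>

definition select_mat :: "nat \<Rightarrow> nat \<Rightarrow> (nat \<Rightarrow> nat) \<Rightarrow> (nat \<Rightarrow> bool) \<Rightarrow> complex mat" where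
  "select_mat K m f c = mat K m (\<lambda>(r, y). if c r \<and> y = f r then 1 else 0)"

lemma select_mat_carrier_mat [simp]: "select_mat K m f c \<in> carrier_mat K m"
  by (simp add: select_mat_def)

lemma select_mat_index [simp]:
  "r < K \<Longrightarrow> y < m \<Longrightarrow> select_mat K m f c $$ (r, y) = (if c r \<and> y = f r then 1 else 0)"
  and select_mat_dim [simp]: "dim_row (select_mat K m f c) = K" "dim_col (select_mat K m f c) = m"
  by (simp_all add: select_mat_def)

lemma select_mat_conj_index:
  assumes f: "\<And>r. r < K \<Longrightarrow> f r < m" and X: "X \<in> carrier_mat m m" and r: "r < K" and s: "s < K"
  shows "(select_mat K m f c * X * mat_adjoint (select_mat K m f c)) $$ (r, s)
       = (if c r \<and> c s then X $$ (f r, f s) else 0)"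
proof -
  let ?S = "select_mat K m f c"
  have SX: "(?S * X) $$ (r, u) = (if c r then X $$ (f r, u) else 0)" if "u < m" for u
  proof -
    have "(?S * X) $$ (r, u) = (\<Sum>y\<in>{0..<m}. (if c r \<and> y = f r then 1 else 0) * X $$ (y, u))"
      using X r that by (simp add: scalar_prod_def)
    also have "\<dots> = (\<Sum>y\<in>{0..<m}. if y = f r then (if c r then X $$ (f r, u) else 0) else 0)"
      by (rule sum.cong) auto
    finally show ?thesis
      using f[OF r] by simp
  qed
  have "(?S * X * mat_adjoint ?S) $$ (r, s) = (\<Sum>u\<in>{0..<m}. (?S * X) $$ (r, u) * cnj (if c s \<and> u = f s then 1 else 0))"
    by (subst index_mult_mat) (use X r s in \<open>simp_all add: scalar_prod_def del: index_mult_mat(1)\<close>)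
  also have "\<dots> = (\<Sum>u\<in>{0..<m}. if u = f s then (if c s then (?S * X) $$ (r, f s) else 0) else 0)"
    by (rule sum.cong) auto
  finally show ?thesis
    using f[OF s] SX[OF f[OF s]] by simp
qed

lemma select_mat_id_hermitian: "mat_adjoint (select_mat K K id c) = select_mat K K id c"
  by (rule eq_matI) auto

lemma unitary_select_mat:
  assumes f: "\<And>r. r < K \<Longrightarrow> f r < K" and inj: "inj_on f {..<K}"
  shows "unitary K (select_mat K K f (\<lambda>_. True))"
proof -
  let ?S = "select_mat K K f (\<lambda>_. True)"
  have "?S * mat_adjoint ?S = ?S * 1\<^sub>m K * mat_adjoint ?S"
    by (simp add: right_mult_one_mat[OF select_mat_carrier_mat])
  also have "\<dots> = 1\<^sub>m K"
  proof (rule eq_matI)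
    fix r s assume "r < dim_row (1\<^sub>m K)" "s < dim_col (1\<^sub>m K)"
    then have "r < K" "s < K" by simp_all
    then show "(?S * 1\<^sub>m K * mat_adjoint ?S) $$ (r, s) = 1\<^sub>m K $$ (r, s)"
      using select_mat_conj_index[of K f K "1\<^sub>m K" r s "\<lambda>_. True"] f inj by (simp add: inj_on_eq_iff)
  qed simp_all
  finally show ?thesis
    unfolding unitary_def by (auto intro: mat_mult_left_right_inverse)
qed

lemma proj_carrier_mat [simp]: "proj a \<in> carrier_mat (dim_vec a) (dim_vec a)"
  by (simp add: proj_def)

lemma proj_hermitian: "mat_adjoint (proj a) = proj a"
  by (rule eq_matI) (auto simp: proj_def)

lemma proj_col_eq_conj:
  assumes U: "U \<in> carrier_mat m m" and k: "k < m"
  shows "proj (col U k) = U * proj (unit_vec m k) * mat_adjoint U"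
proof (rule eq_matI)
  fix i j assume "i < dim_row (U * proj (unit_vec m k) * mat_adjoint U)" "j < dim_col (U * proj (unit_vec m k) * mat_adjoint U)"
  then have i: "i < m" and j: "j < m" using U by auto
  have UP: "(U * proj (unit_vec m k)) $$ (i, b) = (if b = k then U $$ (i, k) else 0)" if "b < m" for b
  proof -
    have "(U * proj (unit_vec m k)) $$ (i, b) = (\<Sum>a\<in>{0..<m}. U $$ (i, a) * (if a = k \<and> b = k then 1 else 0))"
      using U i that by (simp add: scalar_prod_def proj_def unit_vec_def)
    also have "\<dots> = (\<Sum>a\<in>{0..<m}. if a = k then (if b = k then U $$ (i, k) else 0) else 0)"
      by (rule sum.cong) auto
    finally show ?thesis
      using k by simp
  qed
  have "(U * proj (unit_vec m k) * mat_adjoint U) $$ (i, j)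
      = (\<Sum>b\<in>{0..<m}. (U * proj (unit_vec m k)) $$ (i, b) * cnj (U $$ (j, b)))"
    by (subst index_mult_mat) (use U i j in \<open>simp_all add: scalar_prod_def proj_def del: index_mult_mat(1)\<close>)
  also have "\<dots> = (\<Sum>b\<in>{0..<m}. if b = k then U $$ (i, k) * cnj (U $$ (j, k)) else 0)"
    by (rule sum.cong) (simp_all add: UP)
  finally show "proj (col U k) $$ (i, j) = (U * proj (unit_vec m k) * mat_adjoint U) $$ (i, j)"
    using U i j k by (simp add: proj_def)
qed (use U in \<open>simp_all add: proj_def\<close>)

lemma kron_proj_unit_vec_one:
  "kron (proj (unit_vec a k)) (1\<^sub>m n) = select_mat (a * n) (a * n) id (\<lambda>x. x div n = k)"
proof (rule eq_matI)
  fix x y assume "x < dim_row (select_mat (a * n) (a * n) id (\<lambda>x. x div n = k))"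
    "y < dim_col (select_mat (a * n) (a * n) id (\<lambda>x. x div n = k))"
  then have x: "x < a * n" and y: "y < a * n" by simp_all
  then have "n > 0" by (auto intro: gr0I)
  moreover have "(x div n = y div n \<and> x mod n = y mod n) = (x = y)"
    by (metis div_mult_mod_eq)
  ultimately show "kron (proj (unit_vec a k)) (1\<^sub>m n) $$ (x, y) = select_mat (a * n) (a * n) id (\<lambda>x. x div n = k) $$ (x, y)"
    using x y by (auto simp: proj_def unit_vec_def less_mult_imp_div_less)
qed (simp_all add: proj_def)

lemma kron_proj_col_one_one:
  "k < m \<Longrightarrow> kron (proj (col (1\<^sub>m m) k)) (1\<^sub>m n) = select_mat (m * n) (m * n) id (\<lambda>x. x div n = k)"
  using kron_proj_unit_vec_one[of m k n] by simp

lemma dephase_one_index: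
  assumes X: "X \<in> carrier_mat (2 * n) (2 * n)" and x: "x < 2 * n" and y: "y < 2 * n"
  shows "dephase (1\<^sub>m 2) n X $$ (x, y) = (if x div n = y div n then X $$ (x, y) else 0)"
proof -
  let ?F = "\<lambda>k. select_mat (2 * n) (2 * n) id (\<lambda>x. x div n = k)"
  have "(?F k * X * ?F k) $$ (x, y) = (if x div n = k \<and> y div n = k then X $$ (x, y) else 0)" for k
    using select_mat_conj_index[OF _ X x y, of id "\<lambda>x. x div n = k"] select_mat_id_hermitian[of "2 * n"] by simp
  moreover have "x div n < 2" "y div n < 2"
    using x y by (simp_all add: less_mult_imp_div_less)
  ultimately show ?thesis
    unfolding dephase_def using kron_proj_col_one_one[of 0 2 n] kron_proj_col_one_one[of 1 2 n] X x y by auto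
qed

lemma kron_proj_col_one_carrier_mat:
  "U \<in> carrier_mat m m \<Longrightarrow> kron (proj (col U k)) (1\<^sub>m n) \<in> carrier_mat (m * n) (m * n)"
  using kron_carrier_mat[OF proj_carrier_mat one_carrier_mat, of "col U k" n] by simp

lemma dephase_carrier_mat:
  assumes U: "U \<in> carrier_mat 2 2" and X: "X \<in> carrier_mat (2 * n) (2 * n)"
  shows "dephase U n X \<in> carrier_mat (2 * n) (2 * n)"
proof -
  have "kron (proj (col U k)) (1\<^sub>m n) * X * kron (proj (col U k)) (1\<^sub>m n) \<in> carrier_mat (2 * n) (2 * n)" for k
    using kron_proj_col_one_carrier_mat[OF U] X by (intro mult_carrier_mat)
  then show ?thesis
    unfolding dephase_def by (intro add_carrier_mat)
qed

lemma mtrace_dephase_one: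
  assumes X: "X \<in> carrier_mat (2 * n) (2 * n)"
  shows "mtrace (dephase (1\<^sub>m 2) n X) = mtrace X"
  using X dephase_carrier_mat[OF one_carrier_mat X]
  by (simp add: mtrace_def dephase_one_index)

lemma psd_dephase:
  assumes U: "U \<in> carrier_mat 2 2" and X: "X \<in> carrier_mat (2 * n) (2 * n)" and p: "psd X"
  shows "psd (dephase U n X)"
proof -
  let ?P = "\<lambda>k. kron (proj (col U k)) (1\<^sub>m n)"
  have P: "?P k \<in> carrier_mat (2 * n) (2 * n)" for k
    using kron_proj_col_one_carrier_mat[OF U] .
  have "psd (?P k * X * ?P k)" for k
    using psd_congruence[OF X p P] by (simp add: kron_mat_adjoint proj_hermitian)
  moreover have "?P k * X * ?P k \<in> carrier_mat (2 * n) (2 * n)" for k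
    using P X by (intro mult_carrier_mat)
  ultimately show ?thesis
    unfolding dephase_def by (intro psd_add)
qed

lemma meas_iso_one:
  "meas_iso (1\<^sub>m 2) n = select_mat (2 * n * 2) (2 * n) (\<lambda>r. r div 2) (\<lambda>r. r mod 2 = r div 2 div n)"
proof (rule eq_matI)
  let ?F = "\<lambda>k. select_mat (2 * n) (2 * n) id (\<lambda>x. x div n = k)"
  fix r y assume "r < dim_row (select_mat (2 * n * 2) (2 * n) (\<lambda>r. r div 2) (\<lambda>r. r mod 2 = r div 2 div n))"
    "y < dim_col (select_mat (2 * n * 2) (2 * n) (\<lambda>r. r div 2) (\<lambda>r. r mod 2 = r div 2 div n))"
  then have r: "r < 2 * n * 2" and y: "y < 2 * n" by simp_all
  have "kron (?F k) (ket 2 k) $$ (r, y) = (if r div 2 div n = k \<and> y = r div 2 \<and> r mod 2 = k then 1 else 0)" for k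
    using r y by (auto simp: ket_def)
  moreover have "r div 2 div n < 2"
    using r by (simp add: less_mult_imp_div_less)
  ultimately show "meas_iso (1\<^sub>m 2) n $$ (r, y)
    = select_mat (2 * n * 2) (2 * n) (\<lambda>r. r div 2) (\<lambda>r. r mod 2 = r div 2 div n) $$ (r, y)"
    unfolding meas_iso_def using kron_proj_col_one_one[of 0 2 n] kron_proj_col_one_one[of 1 2 n] r y
    by (auto simp: ket_def)
qed (simp_all add: meas_iso_def ket_def proj_def)

lemma partial_transpose_meas_iso_one_index:
  assumes R: "R \<in> carrier_mat (2 * n) (2 * n)" and r: "r < 2 * n * 2" and s: "s < 2 * n * 2"
  shows "partial_transpose2 (2 * n) 2 (meas_iso (1\<^sub>m 2) n * R * mat_adjoint (meas_iso (1\<^sub>m 2) n)) $$ (r, s)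
       = (if s mod 2 = r div 2 div n \<and> r mod 2 = s div 2 div n then R $$ (r div 2, s div 2) else 0)"
proof -
  let ?c = "\<lambda>r. r mod 2 = r div 2 div n"
  let ?r = "r div 2 * 2 + s mod 2" and ?s = "s div 2 * 2 + r mod 2"
  have "partial_transpose2 (2 * n) 2 (meas_iso (1\<^sub>m 2) n * R * mat_adjoint (meas_iso (1\<^sub>m 2) n)) $$ (r, s)
      = (meas_iso (1\<^sub>m 2) n * R * mat_adjoint (meas_iso (1\<^sub>m 2) n)) $$ (?r, ?s)"
    by (rule partial_transpose2_index[OF r s])
  also have "\<dots> = (if ?c ?r \<and> ?c ?s then R $$ (?r div 2, ?s div 2) else 0)"
    unfolding meas_iso_one
    by (rule select_mat_conj_index)
      (use R swap_index_less(1)[OF r s] swap_index_less(1)[OF s r] in \<open>auto simp: less_mult_imp_div_less\<close>)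
  finally show ?thesis
    using swap_index_less[OF r s] swap_index_less[OF s r] by auto
qed

text \<open>The index pair \<open>(x, c)\<close> of \<open>AB \<otimes> A'\<close> is stored at \<open>x * 2 + c\<close>. \<open>block_perm n\<close> lists first the
  pairs with \<open>c = x div n\<close>, one for each \<open>x < 2 * n\<close>, then those with \<open>c \<noteq> x div n\<close>.\<close>
definition block_perm :: "nat \<Rightarrow> nat \<Rightarrow> nat" where
  "block_perm n q = (if q < 2 * n then q * 2 + q div n else (q - 2 * n) * 2 + (1 - (q - 2 * n) div n))"

lemma div_cases_of_less_double: "x < 2 * n \<Longrightarrow> x div n = 0 \<or> x div n = (1 :: nat)"
  using less_mult_imp_div_less[of x 2 n] by linarith

lemma one_minus_div_eq_iff:
  assumes "x < 2 * n" "y < 2 * n"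
  shows "1 - y div n = x div n \<longleftrightarrow> x div n \<noteq> (y div n :: nat)"
  using div_cases_of_less_double[OF assms(1)] div_cases_of_less_double[OF assms(2)] by auto

lemma block_perm_lower:
  assumes "q < 2 * n"
  shows "block_perm n q div 2 = q" "block_perm n q mod 2 = q div n"
  using assms less_mult_imp_div_less[of q 2 n] by (simp_all add: block_perm_def)

lemma block_perm_upper:
  assumes "\<not> q < 2 * n" "q < 2 * n * 2"
  shows "block_perm n q div 2 = q - 2 * n" "block_perm n q mod 2 = 1 - (q - 2 * n) div n"
  using assms less_mult_imp_div_less[of "q - 2 * n" 2 n] by (simp_all add: block_perm_def)

lemma block_perm_less: "q < 2 * n * 2 \<Longrightarrow> block_perm n q < 2 * n * 2"
  using less_mult_imp_div_less[of q 2 n] less_mult_imp_div_less[of "q - 2 * n" 2 n]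
  by (auto simp: block_perm_def)

lemma inj_on_block_perm: "inj_on (block_perm n) {..<2 * n * 2}"
proof (rule inj_onI)
  fix q q' assume q: "q \<in> {..<2 * n * 2}" and q': "q' \<in> {..<2 * n * 2}" and eq: "block_perm n q = block_perm n q'"
  have div: "block_perm n q div 2 = block_perm n q' div 2" and mod: "block_perm n q mod 2 = block_perm n q' mod 2"
    using eq by simp_all
  show "q = q'"
  proof (cases "q < 2 * n"; cases "q' < 2 * n")
    assume "q < 2 * n" "q' < 2 * n"
    then show ?thesis
      using div block_perm_lower[of q n] block_perm_lower[of q' n] by simp
  next
    assume "q < 2 * n" "\<not> q' < 2 * n"
    then have "q = q' - 2 * n" "q div n = 1 - (q' - 2 * n) div n"
      using q' div mod block_perm_lower[of q n] block_perm_upper[of q' n] by simp_all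
    then show ?thesis
      using one_minus_div_eq_iff[OF \<open>q < 2 * n\<close> \<open>q < 2 * n\<close>] by auto
  next
    assume "\<not> q < 2 * n" "q' < 2 * n"
    then have "q' = q - 2 * n" "q' div n = 1 - (q - 2 * n) div n"
      using q div mod block_perm_upper[of q n] block_perm_lower[of q' n] by simp_all
    then show ?thesis
      using one_minus_div_eq_iff[OF \<open>q' < 2 * n\<close> \<open>q' < 2 * n\<close>] by auto
  next
    assume "\<not> q < 2 * n" "\<not> q' < 2 * n"
    moreover from this have "q - 2 * n = q' - 2 * n"
      using q q' div block_perm_upper[of q n] block_perm_upper[of q' n] by simp
    ultimately show ?thesis
      by linarith
  qed
qed

lemma partial_transpose_meas_iso_one_block_diag:
  assumes R: "R \<in> carrier_mat (2 * n) (2 * n)"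
  defines "P \<equiv> select_mat (2 * n * 2) (2 * n * 2) (block_perm n) (\<lambda>_. True)"
    and "D \<equiv> dephase (1\<^sub>m 2) n R"
  shows "P * partial_transpose2 (2 * n) 2 (meas_iso (1\<^sub>m 2) n * R * mat_adjoint (meas_iso (1\<^sub>m 2) n)) * mat_adjoint P
       = four_block_mat D (0\<^sub>m (2 * n) (2 * n)) (0\<^sub>m (2 * n) (2 * n)) (R - D)"
    (is "P * ?T * mat_adjoint P = ?B")
proof -
  have D: "D \<in> carrier_mat (2 * n) (2 * n)"
    unfolding D_def using R by (rule dephase_carrier_mat[OF one_carrier_mat])
  show ?thesis
  proof (rule eq_matI)
  fix q s assume "q < dim_row ?B" "s < dim_col ?B"
  then have q: "q < 2 * n * 2" and s: "s < 2 * n * 2" using D by auto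
  have "(P * ?T * mat_adjoint P) $$ (q, s) = ?T $$ (block_perm n q, block_perm n s)"
    unfolding P_def
    by (rule trans[OF select_mat_conj_index[of "2 * n * 2" "block_perm n" "2 * n * 2" ?T q s]])
      (use q s block_perm_less[of _ n] partial_transpose2_carrier_mat[of "2 * n" 2] in auto)
  also have "\<dots> = (if block_perm n s mod 2 = block_perm n q div 2 div n \<and> block_perm n q mod 2 = block_perm n s div 2 div n
      then R $$ (block_perm n q div 2, block_perm n s div 2) else 0)"
    by (rule partial_transpose_meas_iso_one_index[OF R block_perm_less[OF q] block_perm_less[OF s]])
  also have "\<dots> = ?B $$ (q, s)"
  proof -
    have B: "?B $$ (q, s) = (if q < 2 * n then if s < 2 * n then D $$ (q, s) else 0
        else if s < 2 * n then 0 else (R - D) $$ (q - 2 * n, s - 2 * n))"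
      using D R q s by simp
    show ?thesis
    proof (cases "q < 2 * n"; cases "s < 2 * n")
      assume q2: "q < 2 * n" and s2: "s < 2 * n"
      then show ?thesis
        using B block_perm_lower[OF q2] block_perm_lower[OF s2]
        by (auto simp: D_def dephase_one_index[OF R q2 s2])
    next
      assume q2: "q < 2 * n" and s2: "\<not> s < 2 * n"
      moreover have "s - 2 * n < 2 * n"
        using s by simp
      ultimately show ?thesis
        using B block_perm_lower[OF q2] block_perm_upper[OF s2 s] one_minus_div_eq_iff[of q n "s - 2 * n"] by auto
    next
      assume q2: "\<not> q < 2 * n" and s2: "s < 2 * n"
      moreover have "q - 2 * n < 2 * n"
        using q by simp
      ultimately show ?thesis
        using B block_perm_upper[OF q2 q] block_perm_lower[OF s2] one_minus_div_eq_iff[of s n "q - 2 * n"] by auto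
    next
      assume q2: "\<not> q < 2 * n" and s2: "\<not> s < 2 * n"
      have x: "q - 2 * n < 2 * n" and y: "s - 2 * n < 2 * n"
        using q s by simp_all
      have "?B $$ (q, s) = (R - D) $$ (q - 2 * n, s - 2 * n)"
        using B q2 s2 by simp
      also have "\<dots> = (if (q - 2 * n) div n = (s - 2 * n) div n then 0 else R $$ (q - 2 * n, s - 2 * n))"
        using D R x y by (simp add: D_def dephase_one_index)
      finally show ?thesis
        unfolding block_perm_upper[OF q2 q] block_perm_upper[OF s2 s] one_minus_div_eq_iff[OF x y] one_minus_div_eq_iff[OF y x]
        by auto
    qed
  qed
  finally show "(P * ?T * mat_adjoint P) $$ (q, s) = ?B $$ (q, s)" .
  qed (use R D in \<open>simp_all add: P_def\<close>)
qed

lemma trace_norm_partial_transpose_meas_iso_one: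
  assumes R: "density (2 * n) R"
  shows "trace_norm (partial_transpose2 (2 * n) 2 (meas_iso (1\<^sub>m 2) n * R * mat_adjoint (meas_iso (1\<^sub>m 2) n)))
       = 1 + trace_norm (R - dephase (1\<^sub>m 2) n R)"
proof -
  let ?T = "partial_transpose2 (2 * n) 2 (meas_iso (1\<^sub>m 2) n * R * mat_adjoint (meas_iso (1\<^sub>m 2) n))"
  let ?P = "select_mat (2 * n * 2) (2 * n * 2) (block_perm n) (\<lambda>_. True)"
  let ?D = "dephase (1\<^sub>m 2) n R"
  have Rc: "R \<in> carrier_mat (2 * n) (2 * n)" and "psd R" "mtrace R = 1"
    using R by (simp_all add: density_def)
  have D: "?D \<in> carrier_mat (2 * n) (2 * n)"
    using Rc by (rule dephase_carrier_mat[OF one_carrier_mat])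
  have "trace_norm ?D = 1"
    using trace_norm_psd[OF D psd_dephase[OF one_carrier_mat Rc \<open>psd R\<close>]]
    by (simp add: mtrace_dephase_one[OF Rc] \<open>mtrace R = 1\<close>)
  have "trace_norm ?T = trace_norm (?P * ?T * mat_adjoint ?P)"
    by (rule trace_norm_unitary_conj[OF unitary_select_mat[OF block_perm_less inj_on_block_perm]
          partial_transpose2_carrier_mat, symmetric])
  also have "\<dots> = trace_norm ?D + trace_norm (R - ?D)"
    unfolding partial_transpose_meas_iso_one_block_diag[OF Rc] using D Rc by (intro trace_norm_block_diag) auto
  finally show ?thesis
    using \<open>trace_norm ?D = 1\<close> by simp
qed

section \<open>Change of measurement basis\<close>

lemma kron_proj_col_one_eq_conj:
  assumes U: "U \<in> carrier_mat m m" and k: "k < m"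
  shows "kron (proj (col U k)) (1\<^sub>m n)
       = kron U (1\<^sub>m n) * kron (proj (unit_vec m k)) (1\<^sub>m n) * mat_adjoint (kron U (1\<^sub>m n))"
proof -
  have "proj (unit_vec m k) \<in> carrier_mat m m"
    using proj_carrier_mat[of "unit_vec m k"] by simp
  then show ?thesis
    using kron_mult_mult_one[OF U _ mat_adjoint_carrier_mat[OF U] one_carrier_mat, of _ n]
    by (simp add: proj_col_eq_conj[OF U k] kron_mat_adjoint)
qed

lemma meas_iso_eq_conj:
  assumes U: "U \<in> carrier_mat 2 2"
  shows "meas_iso U n = kron (kron U (1\<^sub>m n)) (1\<^sub>m 2) * meas_iso (1\<^sub>m 2) n * mat_adjoint (kron U (1\<^sub>m n))"
proof -
  let ?V = "kron U (1\<^sub>m n)"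
  let ?M = "\<lambda>k. kron (kron (proj (unit_vec 2 k)) (1\<^sub>m n)) (ket 2 k)"
  have V: "?V \<in> carrier_mat (2 * n) (2 * n)"
    using U by simp
  have F: "kron (proj (unit_vec 2 k)) (1\<^sub>m n) \<in> carrier_mat (2 * n) (2 * n)" for k
    unfolding kron_proj_unit_vec_one by simp
  have ket: "ket 2 k \<in> carrier_mat 2 1" for k
    by (simp add: ket_def)
  have M: "?M k \<in> carrier_mat (2 * n * 2) (2 * n)" for k
    using kron_carrier_mat[OF F ket] by simp
  have summand: "kron (kron (proj (col U k)) (1\<^sub>m n)) (ket 2 k) = kron ?V (1\<^sub>m 2) * ?M k * mat_adjoint ?V" if "k < 2" for k
    using kron_mult_mult_one[OF V F mat_adjoint_carrier_mat[OF V] ket] unfolding kron_one_right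
    by (simp add: kron_proj_col_one_eq_conj[OF U that])
  have "meas_iso (1\<^sub>m 2) n = ?M 0 + ?M 1"
    by (simp add: meas_iso_def)
  then show ?thesis
    unfolding meas_iso_def using summand[of 0] summand[of 1]
      mult_add_mult_distrib[OF kron_carrier_mat[OF V one_carrier_mat] M M mat_adjoint_carrier_mat[OF V]]
    by simp
qed

lemma dephase_eq_conj:
  assumes U: "unitary 2 U" and X: "X \<in> carrier_mat (2 * n) (2 * n)"
  defines "V \<equiv> kron U (1\<^sub>m n)"
  shows "dephase U n X = V * dephase (1\<^sub>m 2) n (mat_adjoint V * X * V) * mat_adjoint V"
proof -
  define R where "R = mat_adjoint V * X * V"
  let ?F = "\<lambda>k. kron (proj (unit_vec 2 k)) (1\<^sub>m n)"
  have uV: "unitary (2 * n) V"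
    unfolding V_def by (rule unitary_kron_one[OF U])
  note V = unitary_carrier_mat[OF uV] and VV = unitary_left_inverse[OF uV]
  have Va: "mat_adjoint V \<in> carrier_mat (2 * n) (2 * n)"
    using V by simp
  have F: "?F k \<in> carrier_mat (2 * n) (2 * n)" for k
    unfolding kron_proj_unit_vec_one by simp
  have R: "R \<in> carrier_mat (2 * n) (2 * n)"
    unfolding R_def using Va X V by (intro mult_carrier_mat)
  have X_eq: "X = V * R * mat_adjoint V"
    unfolding R_def using unitary_conj_mat_adjoint_conj[OF uV X] by simp
  have summand: "kron (proj (col U k)) (1\<^sub>m n) * X * kron (proj (col U k)) (1\<^sub>m n) = V * (?F k * R * ?F k) * mat_adjoint V"
    if "k < 2" for k
  proof -
    have "kron (proj (col U k)) (1\<^sub>m n) * X = V * (?F k * R) * mat_adjoint V"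
      unfolding kron_proj_col_one_eq_conj[OF unitary_carrier_mat[OF U] that] V_def[symmetric]
      by (subst X_eq) (rule isometry_conj_mult[OF V VV F R])
    then show ?thesis
      unfolding kron_proj_col_one_eq_conj[OF unitary_carrier_mat[OF U] that] V_def[symmetric]
      using isometry_conj_mult[OF V VV mult_carrier_mat[OF F R] F] by simp
  qed
  have "dephase (1\<^sub>m 2) n R = ?F 0 * R * ?F 0 + ?F 1 * R * ?F 1"
    by (simp add: dephase_def)
  moreover have "?F k * R * ?F k \<in> carrier_mat (2 * n) (2 * n)" for k
    using F R by (intro mult_carrier_mat)
  ultimately show ?thesis
    unfolding dephase_def R_def[symmetric] using summand[of 0] summand[of 1] mult_add_mult_distrib[OF V _ _ Va] by simp
qed

lemma meas_iso_state_eq_conj: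
  assumes U: "U \<in> carrier_mat 2 2" and \<rho>: "\<rho> \<in> carrier_mat (2 * n) (2 * n)"
  defines "V \<equiv> kron U (1\<^sub>m n)"
  shows "meas_iso U n * \<rho> * mat_adjoint (meas_iso U n)
       = kron V (1\<^sub>m 2) * (meas_iso (1\<^sub>m 2) n * (mat_adjoint V * \<rho> * V) * mat_adjoint (meas_iso (1\<^sub>m 2) n))
         * mat_adjoint (kron V (1\<^sub>m 2))"
proof -
  have V: "V \<in> carrier_mat (2 * n) (2 * n)"
    unfolding V_def using U one_carrier_mat by (rule kron_carrier_mat)
  have W: "kron V (1\<^sub>m 2) \<in> carrier_mat (2 * n * 2) (2 * n * 2)"
    using V one_carrier_mat by (rule kron_carrier_mat)
  have M: "meas_iso (1\<^sub>m 2) n \<in> carrier_mat (2 * n * 2) (2 * n)"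
    by (simp add: meas_iso_one)
  show ?thesis
    unfolding meas_iso_eq_conj[OF U] V_def[symmetric]
    using mult_conj_mat_adjoint[OF mult_carrier_mat[OF W M] mat_adjoint_carrier_mat[OF V] \<rho>]
      mult_conj_mat_adjoint[OF W M mult_carrier_mat[OF mult_carrier_mat[OF mat_adjoint_carrier_mat[OF V] \<rho>] V]]
    by simp
qed

lemma trace_norm_partial_transpose_meas_iso:
  assumes \<rho>: "density (2 * n) \<rho>" and U: "unitary 2 U"
  shows "trace_norm (partial_transpose2 (2 * n) 2 (meas_iso U n * \<rho> * mat_adjoint (meas_iso U n)))
       = 1 + trace_norm (\<rho> - dephase U n \<rho>)"
proof -
  define V where "V = kron U (1\<^sub>m n)"
  define R where "R = mat_adjoint V * \<rho> * V"
  let ?M = "meas_iso (1\<^sub>m 2) n"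
  have uV: "unitary (2 * n) V"
    unfolding V_def by (rule unitary_kron_one[OF U])
  have Vc: "V \<in> carrier_mat (2 * n) (2 * n)" and \<rho>c: "\<rho> \<in> carrier_mat (2 * n) (2 * n)"
    using unitary_carrier_mat[OF uV] \<rho> by (simp_all add: density_def)
  have R: "density (2 * n) R"
    unfolding R_def by (rule density_unitary_conj[OF uV \<rho>])
  then have Rc: "R \<in> carrier_mat (2 * n) (2 * n)"
    by (simp add: density_def)
  have D: "dephase (1\<^sub>m 2) n R \<in> carrier_mat (2 * n) (2 * n)"
    using Rc by (rule dephase_carrier_mat[OF one_carrier_mat])
  have M: "?M \<in> carrier_mat (2 * n * 2) (2 * n)"
    by (simp add: meas_iso_one)
  have "?M * R * mat_adjoint ?M \<in> carrier_mat (2 * n * 2) (2 * n * 2)"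
    using mult_carrier_mat[OF M Rc] mat_adjoint_carrier_mat[OF M] by (rule mult_carrier_mat)
  then have "partial_transpose2 (2 * n) 2 (meas_iso U n * \<rho> * mat_adjoint (meas_iso U n))
      = kron V (1\<^sub>m 2) * partial_transpose2 (2 * n) 2 (?M * R * mat_adjoint ?M) * mat_adjoint (kron V (1\<^sub>m 2))"
    unfolding meas_iso_state_eq_conj[OF unitary_carrier_mat[OF U] \<rho>c] V_def[symmetric] R_def[symmetric]
    by (rule partial_transpose2_kron_one_conj[OF Vc])
  then have "trace_norm (partial_transpose2 (2 * n) 2 (meas_iso U n * \<rho> * mat_adjoint (meas_iso U n)))
      = trace_norm (partial_transpose2 (2 * n) 2 (?M * R * mat_adjoint ?M))"
    using trace_norm_unitary_conj[OF unitary_kron_one[OF uV] partial_transpose2_carrier_mat] by simp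
  also have "\<dots> = 1 + trace_norm (R - dephase (1\<^sub>m 2) n R)"
    by (rule trace_norm_partial_transpose_meas_iso_one[OF R])
  also have "trace_norm (R - dephase (1\<^sub>m 2) n R) = trace_norm (\<rho> - dephase U n \<rho>)"
  proof -
    have "\<rho> - dephase U n \<rho> = V * (R - dephase (1\<^sub>m 2) n R) * mat_adjoint V"
      using unitary_conj_mat_adjoint_conj[OF uV \<rho>c] dephase_eq_conj[OF U \<rho>c]
        mult_minus_mult_distrib[OF Vc Rc D mat_adjoint_carrier_mat[OF Vc]]
      unfolding V_def R_def by simp
    then show ?thesis
      using trace_norm_unitary_conj[OF uV minus_carrier_mat[OF D]] by simp
  qed
  finally show ?thesis .
qed

theorem theorem7:
  fixes n :: nat and \<rho> :: "complex mat"
  assumes "density (2 * n) \<rho>"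
  shows "Q_neg n \<rho> = Inf {trace_norm (\<rho> - dephase U n \<rho>) / 2 | U. unitary2 U}"
proof -
  have negativity: "negativity (2 * n) 2 (meas_iso U n * \<rho> * mat_adjoint (meas_iso U n))
      = trace_norm (\<rho> - dephase U n \<rho>) / 2" if "unitary2 U" for U
    using trace_norm_partial_transpose_meas_iso[OF assms] that by (simp add: negativity_def unitary2_iff_unitary)
  then have "{negativity (2 * n) 2 (meas_iso U n * \<rho> * mat_adjoint (meas_iso U n)) | U. unitary2 U}
      = {trace_norm (\<rho> - dephase U n \<rho>) / 2 | U. unitary2 U}"
    by force
  then show ?thesis
    unfolding Q_neg_def by simp
qed

end
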